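(* Let $\Gamma$ be a context of the annotated system, $a$ an annotated term, $S$ an annotated type and $\theta\in\{\downarrow,?\}$. If $\Gamma\Vdash a:S\ \theta$ is derivable in the annotated type checking system, then $|\Gamma|\vdash |a| : |S|\ \theta$ is derivable in the (unannotated) $\mathsf{T}^{\mathsf{eq}\downarrow}$ type assignment system.
   Context: Unannotated $\mathsf{T}^{\mathsf{eq}\downarrow}$. Effects $\theta,\rho ::= \downarrow \mid ?$, ordered by $\theta\le\theta$ and $\downarrow\ \le\ ?$. Types $T ::= \mathsf{nat} \mid \Pi^{\theta} x{:}T.\,T' \mid t = t' \mid \mathsf{Terminates}\ t$. Terms $t ::= x \mid \lambda x.t \mid t\,t' \mid 0 \mid \mathsf{Suc}\,t \mid \mathsf{rec}\ f(x) = t \mid \mathsf{case}\ t\ t'\ t'' \mid \mathsf{join} \mid \mathsf{terminates} \mid \mathsf{contra} \mid \mathsf{abort}$. $[t'/x]$ is capture-avoiding substitution, $\mathrm{fv}$ free variables. Values $v ::= x \mid 0 \mid \mathsf{Suc}\,v \mid \lambda x.t \mid \mathsf{rec}\ f(x)=t \mid \mathsf{join}\mid\mathsf{terminates}\mid\mathsf{contra}$. Evaluation contexts $\mathcal{C} ::= [\,] \mid \mathsf{Suc}\,\mathcal{C} \mid \mathcal{C}\,t \mid v\,\mathcal{C} \mid \mathsf{case}\ \mathcal{C}\ t\ t'$. Reduction: $(\lambda x.t)\,v \leadsto_\beta [v/x]t$; $\mathsf{case}\ 0\ t\ t' \leadsto_\beta t$; $\mathsf{case}\ (\mathsf{Suc}\,v)\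 t\ t' \leadsto_\beta t'\,v$; $(\mathsf{rec}\ f(x)=t)\,v \leadsto_\beta [v/x][\mathsf{rec}\ f(x)=t/f]t$; $\mathcal{C}[t]\leadsto\mathcal{C}[t']$ if $t\leadsto_\beta t'$; $\mathcal{C}[\mathsf{abort}]\leadsto\mathsf{abort}$; $\leadsto^*$ reflexive–transitive closure, $\leadsto^N$ reduction in at most a fixed global bound $N$ of steps. Unannotated judgments ($\Gamma ::= \cdot\mid\Gamma,x{:}T$): $\cdot\vdash\mathsf{Ok}$; $\Gamma,x{:}T\vdash\mathsf{Ok}$ if $\Gamma\vdash\mathsf{Ok}$, $\Gamma\vdash T$. $\Gamma\vdash\mathsf{nat}$ if $\Gamma\vdash\mathsf{Ok}$; $\Gamma\vdash\Pi^\theta x{:}T.T'$ if $\Gamma,x{:}T\vdash T'$; $\Gamma\vdash t=t'$ if $\Gamma\vdash t:T\ ?$, $\Gamma\vdash t':T'\ ?$ for some $T,T'$; $\Gamma\vdash\mathsf{Terminates}\ t$ if $\Gamma\vdash t:T\ ?$ for some $T$. Rules for $\Gamma\vdash t:T\ \theta$ ($\theta$ arbitrary in conclusions unless stated): Var ($\Gamma(x)=T$, $\Gamma\vdash\mathsf{Ok}$ gives $x:T\ \theta$); Join ($t\leadsto^*t_0$, $t'\leadsto^*t_0$, $\Gamma\vdash t:T\ ?$, $\Gamma\vdash t':T'\ ?$ gives $\mathsf{join}:t=t'\ \theta$); Conv ($t:[t_2/x]T\ \theta$, $t':t_1=t_2\ \downarrow$, $\Gamma\vdash[t_1/x]T$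 gives $t:[t_1/x]T\ \theta$); Reflect ($t:T\ ?$, $t':\mathsf{Terminates}\ t\ \downarrow$ gives $t:T\ \theta$); Reify ($t:T\ \downarrow$ gives $\mathsf{terminates}:\mathsf{Terminates}\ t\ \theta$); CtxTerm ($t:\mathsf{Terminates}\ \mathcal{C}[t']\ \theta$ gives $t:\mathsf{Terminates}\ t'\ \theta$); Abs ($\Gamma,x{:}T'\vdash t:T\ \rho$, $\Gamma\vdash\Pi^\rho x{:}T'.T$ gives $\lambda x.t:\Pi^\rho x{:}T'.T\ \theta$); App ($t:\Pi^\rho x{:}T'.T\ \theta$, $t':T'\ \theta$, $\rho\le\theta$ gives $t\,t':[t'/x]T\ \theta$); Zero ($\Gamma\vdash\mathsf{Ok}$ gives $0:\mathsf{nat}\ \theta$); Suc ($t:\mathsf{nat}\ \theta$ gives $\mathsf{Suc}\,t:\mathsf{nat}\ \theta$); Rec ($\Gamma,f{:}\Pi^?x{:}T'.T,x{:}T'\vdash t:T\ ?$ gives $\mathsf{rec}\ f(x)=t:\Pi^?x{:}T'.T\ \theta$); RecNat ($p\notin\mathrm{fv}(t)$, $\Gamma,f{:}\Pi^?x{:}\mathsf{nat}.T,x{:}\mathsf{nat},p{:}\Pi^\downarrow x_1{:}\mathsf{nat}.\Pi^\downarrow p'{:}(x=\mathsf{Suc}\,x_1).\mathsf{Terminates}\ (f\,x_1)\vdash t:T\ \downarrow$ gives $\mathsf{rec}\ f(x)=t:\Pi^\downarrow x{:}\mathsf{nat}.T\ \theta$); Case ($t:\mathsf{nat}\ \theta$,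 $t':[0/x]T\ \theta$, $t'':\Pi^\rho x'{:}\mathsf{nat}.[\mathsf{Suc}\,x'/x]T\ \theta$, $\rho\le\theta$ gives $\mathsf{case}\ t\ t'\ t'':[t/x]T\ \theta$); Contra ($t:0=\mathsf{Suc}\,t'\ \downarrow$ gives $\mathsf{contra}:T\ \theta$); Abort ($\Gamma\vdash\mathsf{Ok}$ gives $\mathsf{abort}:T\ ?$). Annotated system. Types $S ::= \mathsf{nat}\mid\Pi^\theta x{:}S.S'\mid a=a'\mid\mathsf{Terminates}\ a$. Terms $a ::= x\mid a\,a'\mid\lambda^\theta x{:}S.a\mid 0\mid\mathsf{Suc}\,a\mid\mathsf{rec}_{\mathsf{nat}}\ f(x\ p):S=a\mid\mathsf{rec}\ f(x{:}S):S'=a\mid\mathsf{case}\ x.S\ a\ a'\ a''\mid\mathsf{join}\ a\ a'\mid\mathsf{conv}\ x.S\ a\ a'\mid\mathsf{terminates}\ a\mid\mathsf{reflect}\ a\ a'\mid\mathsf{inv}\ a\ a'\mid\mathsf{contra}\ S\ a\mid\mathsf{abort}\ S$. Erasure $|\cdot|$: homomorphic on types ($|\Pi^\theta x{:}S.S'|=\Pi^\theta x{:}|S|.|S'|$, etc.) and on $x$, application, $0$, $\mathsf{Suc}$; $|\lambda^\theta x{:}S.a|=\lambda x.|a|$; $|\mathsf{case}\ x.S\ a\ a'\ a''|=\mathsf{case}\ |a|\ |a'|\ |a''|$; both recursion forms erase to $\mathsf{rec}\ f(x)=|a|$; $|\mathsf{join}\ a\ a'|=\mathsf{join}$, $|\mathsf{terminates}\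 a|=\mathsf{terminates}$, $|\mathsf{contra}\ S\ a|=\mathsf{contra}$, $|\mathsf{abort}\ S|=\mathsf{abort}$; $|\mathsf{conv}\ x.S\ a\ a'|=|\mathsf{reflect}\ a\ a'|=|\mathsf{inv}\ a\ a'|=|a|$. Contexts $\Gamma ::= \cdot\mid\Gamma,x{:}S$, erased pointwise. Annotated judgments: $\cdot\Vdash\mathsf{Ok}$; $\Gamma,x{:}S\Vdash\mathsf{Ok}$ if $\Gamma\Vdash\mathsf{Ok}$, $\Gamma\Vdash S$. $\Gamma\Vdash\mathsf{nat}$ if $\Gamma\Vdash\mathsf{Ok}$; $\Gamma\Vdash\Pi^\theta x{:}S.S'$ if $\Gamma\Vdash S$ and $\Gamma,x{:}S\Vdash S'$; $\Gamma\Vdash a=a'$ if $\Gamma\Vdash a:S\ ?$, $\Gamma\Vdash a':S'\ ?$, $\Gamma\Vdash S$, $\Gamma\Vdash S'$; $\Gamma\Vdash\mathsf{Terminates}\ a$ if $\Gamma\Vdash a:S\ ?$. Rules for $\Gamma\Vdash a:S\ \theta$ ($\theta$ arbitrary in conclusions unless stated): A_Var ($\Gamma(x)=S$, $\Gamma\Vdash\mathsf{Ok}$ gives $x:S\ \theta$); A_Join ($|a|\leadsto^N t$, $|a'|\leadsto^N t$, $a:S\ ?$, $a':S'\ ?$ gives $\mathsf{join}\ a\ a':a=a'\ \theta$); A_Conv ($a:[a_2/x]S\ \theta$, $a':a_1=a_2\ \downarrow$, $\Gamma\Vdash[a_1/x]S$ gives $\mathsf{conv}\ x.S\ a\ a':[a_1/x]S\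 \theta$); A_Reflect ($a:S\ ?$, $a':\mathsf{Terminates}\ a\ \downarrow$ gives $\mathsf{reflect}\ a\ a':S\ \theta$); A_Reify ($a:S\ \downarrow$ gives $\mathsf{terminates}\ a:\mathsf{Terminates}\ a\ \theta$); A_CtxTerm ($a:\mathsf{Terminates}\ a''\ \theta$ and $|a''|=\mathcal{C}[|a'|]$ for some evaluation context $\mathcal{C}$ gives $\mathsf{inv}\ a\ a':\mathsf{Terminates}\ a'\ \theta$); A_Abs ($\Gamma,x{:}S'\Vdash a:S\ \rho$, $\Gamma\Vdash\Pi^\rho x{:}S'.S$ gives $\lambda^\rho x{:}S'.a:\Pi^\rho x{:}S'.S\ \theta$); A_App ($a:\Pi^\rho x{:}S'.S\ \theta$, $a':S'\ \theta$, $\rho\le\theta$ gives $a\,a':[a'/x]S\ \theta$); A_Zero ($\Gamma\Vdash\mathsf{Ok}$ gives $0:\mathsf{nat}\ \theta$); A_Suc; A_Rec ($\Gamma,f{:}\Pi^?x{:}S'.S,x{:}S'\Vdash a:S\ ?$ gives $\mathsf{rec}\ f(x{:}S'):S=a:\Pi^?x{:}S'.S\ \theta$); A_RecNat ($p\notin\mathrm{fv}(a)$, $\Gamma,f{:}\Pi^?x{:}\mathsf{nat}.S,x{:}\mathsf{nat},p{:}\Pi^\downarrow x_1{:}\mathsf{nat}.\Pi^\downarrow p'{:}(x=\mathsf{Suc}\,x_1).\mathsf{Terminates}\ (f\,x_1)\Vdash a:S\ \downarrow$ gives $\mathsf{rec}_{\mathsf{nat}}\ f(x\ p):S=a:\Pi^\downarrow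 x{:}\mathsf{nat}.S\ \theta$); A_Case ($a:\mathsf{nat}\ \theta$, $a':[0/x]S\ \theta$, $a'':\Pi^\rho x'{:}\mathsf{nat}.[\mathsf{Suc}\,x'/x]S\ \theta$, $\rho\le\theta$ gives $\mathsf{case}\ x.S\ a\ a'\ a'':[a/x]S\ \theta$); A_Contra ($a:0=\mathsf{Suc}\,a'\ \downarrow$ gives $\mathsf{contra}\ S\ a:S\ \theta$); A_Abort ($\Gamma\Vdash\mathsf{Ok}$ gives $\mathsf{abort}\ S:S\ ?$). *)

theory Defs
  imports Main
begin

datatype eff = Down | Q   (* Down = terminating (\<down>), Q = possibly diverging (?) *)

fun eff_le :: "eff \<Rightarrow> eff \<Rightarrow> bool" where
  "eff_le Down _ = True"
| "eff_le Q Q = True"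
| "eff_le Q Down = False"

(*   Rec t binds two variables: in t, index 0 = x, index 1 = f.           *)

datatype tm =
    Var nat
  | Lam tm
  | App tm tm
  | Zero
  | TSuc tm
  | Rec tm
  | Case tm tm tm
  | Join
  | Terminates
  | Contra
  | Abort

datatype ty =
    Nat
  | Pi eff ty ty
  | Eq tm tm
  | Term tm

primrec tlift :: "nat \<Rightarrow> nat \<Rightarrow> tm \<Rightarrow> tm" where
  "tlift k c (Var i) = (if c \<le> i then Var (i + k) else Var i)"
| "tlift k c (Lam t) = Lam (tlift k (Suc c) t)"
| "tlift k c (App t u) = App (tlift k c t) (tlift k c u)"
| "tlift k c Zero = Zero"
| "tlift k c (TSuc t) = TSuc (tlift k c t)"
| "tlift k c (Rec t) = Rec (tlift k (c + 2) t)"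
| "tlift k c (Case t u w) = Case (tlift k c t) (tlift k c u) (tlift k c w)"
| "tlift k c Join = Join"
| "tlift k c Terminates = Terminates"
| "tlift k c Contra = Contra"
| "tlift k c Abort = Abort"

primrec tsubst :: "nat \<Rightarrow> tm \<Rightarrow> tm \<Rightarrow> tm" where
  "tsubst j s (Var i) = (if i = j then s else if j < i then Var (i - 1) else Var i)"
| "tsubst j s (Lam t) = Lam (tsubst (Suc j) (tlift 1 0 s) t)"
| "tsubst j s (App t u) = App (tsubst j s t) (tsubst j s u)"
| "tsubst j s Zero = Zero"
| "tsubst j s (TSuc t) = TSuc (tsubst j s t)"
| "tsubst j s (Rec t) = Rec (tsubst (j + 2) (tlift 2 0 s) t)"
| "tsubst j s (Case t u w) = Case (tsubst j s t) (tsubst j s u) (tsubst j s w)"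
| "tsubst j s Join = Join"
| "tsubst j s Terminates = Terminates"
| "tsubst j s Contra = Contra"
| "tsubst j s Abort = Abort"

primrec tylift :: "nat \<Rightarrow> nat \<Rightarrow> ty \<Rightarrow> ty" where
  "tylift k c Nat = Nat"
| "tylift k c (Pi e A B) = Pi e (tylift k c A) (tylift k (Suc c) B)"
| "tylift k c (Eq t u) = Eq (tlift k c t) (tlift k c u)"
| "tylift k c (Term t) = Term (tlift k c t)"

primrec tysubst :: "nat \<Rightarrow> tm \<Rightarrow> ty \<Rightarrow> ty" where
  "tysubst j s Nat = Nat"
| "tysubst j s (Pi e A B) = Pi e (tysubst j s A) (tysubst (Suc j) (tlift 1 0 s) B)"
| "tysubst j s (Eq t u) = Eq (tsubst j s t) (tsubst j s u)"
| "tysubst j s (Term t) = Term (tsubst j s t)"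

inductive is_value :: "tm \<Rightarrow> bool" where
  "is_value (Var i)"
| "is_value Zero"
| "is_value v \<Longrightarrow> is_value (TSuc v)"
| "is_value (Lam t)"
| "is_value (Rec t)"
| "is_value Join"
| "is_value Terminates"
| "is_value Contra"

datatype ectx =
    Hole
  | CSuc ectx
  | CAppL ectx tm
  | CAppR tm ectx
  | CCase ectx tm tm

primrec fill :: "ectx \<Rightarrow> tm \<Rightarrow> tm" where
  "fill Hole t = t"
| "fill (CSuc C) t = TSuc (fill C t)"
| "fill (CAppL C u) t = App (fill C t) u"
| "fill (CAppR v C) t = App v (fill C t)"
| "fill (CCase C u w) t = Case (fill C t) u w"

primrec is_ectx :: "ectx \<Rightarrow> bool" where
  "is_ectx Hole = True"
| "is_ectx (CSuc C) = is_ectx C"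
| "is_ectx (CAppL C u) = is_ectx C"
| "is_ectx (CAppR v C) = (is_value v \<and> is_ectx C)"
| "is_ectx (CCase C u w) = is_ectx C"

inductive beta :: "tm \<Rightarrow> tm \<Rightarrow> bool" where
  beta_lam: "is_value v \<Longrightarrow> beta (App (Lam t) v) (tsubst 0 v t)"
| beta_case0: "beta (Case Zero t u) t"
| beta_caseS: "is_value v \<Longrightarrow> beta (Case (TSuc v) t u) (App u v)"
| beta_rec: "is_value v \<Longrightarrow>
     beta (App (Rec t) v) (tsubst 0 v (tsubst 1 (tlift 1 0 (Rec t)) t))"

inductive step :: "tm \<Rightarrow> tm \<Rightarrow> bool" where
  step_ctx: "beta t t' \<Longrightarrow> is_ectx C \<Longrightarrow> step (fill C t) (fill C t')"
| step_abort: "is_ectx C \<Longrightarrow> step (fill C Abort) Abort"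

definition steps_le :: "nat \<Rightarrow> tm \<Rightarrow> tm \<Rightarrow> bool" where
  "steps_le N t t' \<longleftrightarrow> (\<exists>k\<le>N. (step ^^ k) t t')"

(* Contexts: lists, head = most recently bound variable (index 0);
   each entry is a type in the context of the tail. *)
type_synonym ctx = "ty list"

definition lookup :: "ctx \<Rightarrow> nat \<Rightarrow> ty" where
  "lookup G i = tylift (Suc i) 0 (G ! i)"

(* type of the termination-hypothesis p in RecNat, in context G,f,x
   (x = index 0, f = index 1):  \<Pi>\<down> x1:nat. \<Pi>\<down> p':(x = Suc x1). Terminates (f x1) *)
definition recnat_hyp :: ty where
  "recnat_hyp = Pi Down Nat (Pi Down (Eq (Var 1) (TSuc (Var 0))) (Term (App (Var 3) (Var 1))))"

inductive
  ctx_ok :: "ctx \<Rightarrow> bool" and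
  ty_wf :: "ctx \<Rightarrow> ty \<Rightarrow> bool" and
  has_type :: "ctx \<Rightarrow> tm \<Rightarrow> ty \<Rightarrow> eff \<Rightarrow> bool"
where
  ok_nil: "ctx_ok []"
| ok_cons: "ctx_ok G \<Longrightarrow> ty_wf G T \<Longrightarrow> ctx_ok (T # G)"
| wf_nat: "ctx_ok G \<Longrightarrow> ty_wf G Nat"
| wf_pi: "ty_wf (T # G) T' \<Longrightarrow> ty_wf G (Pi th T T')"
| wf_eq: "has_type G t T Q \<Longrightarrow> has_type G t' T' Q \<Longrightarrow> ty_wf G (Eq t t')"
| wf_term: "has_type G t T Q \<Longrightarrow> ty_wf G (Term t)"
| T_Var: "i < length G \<Longrightarrow> ctx_ok G \<Longrightarrow> has_type G (Var i) (lookup G i) th"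
| T_Join: "(step\<^sup>*\<^sup>*) t t0 \<Longrightarrow> (step\<^sup>*\<^sup>*) t' t0 \<Longrightarrow> has_type G t T Q \<Longrightarrow> has_type G t' T' Q
            \<Longrightarrow> has_type G Join (Eq t t') th"
| T_Conv: "has_type G t (tysubst 0 t2 T) th \<Longrightarrow> has_type G t' (Eq t1 t2) Down
            \<Longrightarrow> ty_wf G (tysubst 0 t1 T) \<Longrightarrow> has_type G t (tysubst 0 t1 T) th"
| T_Reflect: "has_type G t T Q \<Longrightarrow> has_type G t' (Term t) Down \<Longrightarrow> has_type G t T th"
| T_Reify: "has_type G t T Down \<Longrightarrow> has_type G Terminates (Term t) th"
| T_CtxTerm: "has_type G t (Term (fill C t')) th \<Longrightarrow> is_ectx C \<Longrightarrow> has_type G t (Term t') th"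
| T_Abs: "has_type (T' # G) t T rho \<Longrightarrow> ty_wf G (Pi rho T' T) \<Longrightarrow> has_type G (Lam t) (Pi rho T' T) th"
| T_App: "has_type G t (Pi rho T' T) th \<Longrightarrow> has_type G t' T' th \<Longrightarrow> eff_le rho th
            \<Longrightarrow> has_type G (App t t') (tysubst 0 t' T) th"
| T_Zero: "ctx_ok G \<Longrightarrow> has_type G Zero Nat th"
| T_Suc: "has_type G t Nat th \<Longrightarrow> has_type G (TSuc t) Nat th"
| T_Rec: "has_type (tylift 1 0 T' # Pi Q T' T # G) t (tylift 1 1 T) Q
            \<Longrightarrow> has_type G (Rec t) (Pi Q T' T) th"
| T_RecNat: "has_type (recnat_hyp # Nat # Pi Q Nat T # G) (tlift 1 0 t) (tylift 1 2 (tylift 1 0 T)) Down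
            \<Longrightarrow> has_type G (Rec t) (Pi Down Nat T) th"
| T_Case: "has_type G t Nat th \<Longrightarrow> has_type G t' (tysubst 0 Zero T) th
            \<Longrightarrow> has_type G t'' (Pi rho Nat (tysubst 0 (TSuc (Var 0)) (tylift 1 1 T))) th
            \<Longrightarrow> eff_le rho th \<Longrightarrow> has_type G (Case t t' t'') (tysubst 0 t T) th"
| T_Contra: "has_type G t (Eq Zero (TSuc t')) Down \<Longrightarrow> has_type G Contra T th"
| T_Abort: "ctx_ok G \<Longrightarrow> has_type G Abort T Q"

(*   ARecNat S a      : rec_nat f(x p):S = a ; S under x, a under f,x     *)
(*                      (p \<notin> fv(a), so a is not bound over p)            *)
(*   ARec S' S a      : rec f(x:S'):S = a ; S under x, a under f,x        *)
(*   ACase S a a' a'' : case x.S ... ; S under x                          *)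
(*   AConv S a a'     : conv x.S a a' ; S under x                         *)

datatype aty =
    ANat
  | APi eff aty aty
  | AEq atm atm
  | ATerm atm
and atm =
    AVar nat
  | AApp atm atm
  | ALam eff aty atm
  | AZero
  | ASuc atm
  | ARecNat aty atm
  | ARec aty aty atm
  | ACase aty atm atm atm
  | AJoin atm atm
  | AConv aty atm atm
  | ATerminates atm
  | AReflect atm atm
  | AInv atm atm
  | AContra aty atm
  | AAbort aty

primrec alift_ty :: "nat \<Rightarrow> nat \<Rightarrow> aty \<Rightarrow> aty"
  and alift :: "nat \<Rightarrow> nat \<Rightarrow> atm \<Rightarrow> atm" where
  "alift_ty k c ANat = ANat"
| "alift_ty k c (APi e A B) = APi e (alift_ty k c A) (alift_ty k (Suc c) B)"
| "alift_ty k c (AEq a b) = AEq (alift k c a) (alift k c b)"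
| "alift_ty k c (ATerm a) = ATerm (alift k c a)"
| "alift k c (AVar i) = (if c \<le> i then AVar (i + k) else AVar i)"
| "alift k c (AApp a b) = AApp (alift k c a) (alift k c b)"
| "alift k c (ALam e S a) = ALam e (alift_ty k c S) (alift k (Suc c) a)"
| "alift k c AZero = AZero"
| "alift k c (ASuc a) = ASuc (alift k c a)"
| "alift k c (ARecNat S a) = ARecNat (alift_ty k (Suc c) S) (alift k (c + 2) a)"
| "alift k c (ARec S' S a) = ARec (alift_ty k c S') (alift_ty k (Suc c) S) (alift k (c + 2) a)"
| "alift k c (ACase S a b d) = ACase (alift_ty k (Suc c) S) (alift k c a) (alift k c b) (alift k c d)"
| "alift k c (AJoin a b) = AJoin (alift k c a) (alift k c b)"
| "alift k c (AConv S a b) = AConv (alift_ty k (Suc c) S) (alift k c a) (alift k c b)"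
| "alift k c (ATerminates a) = ATerminates (alift k c a)"
| "alift k c (AReflect a b) = AReflect (alift k c a) (alift k c b)"
| "alift k c (AInv a b) = AInv (alift k c a) (alift k c b)"
| "alift k c (AContra S a) = AContra (alift_ty k c S) (alift k c a)"
| "alift k c (AAbort S) = AAbort (alift_ty k c S)"

primrec asubst_ty :: "nat \<Rightarrow> atm \<Rightarrow> aty \<Rightarrow> aty"
  and asubst :: "nat \<Rightarrow> atm \<Rightarrow> atm \<Rightarrow> atm" where
  "asubst_ty j s ANat = ANat"
| "asubst_ty j s (APi e A B) = APi e (asubst_ty j s A) (asubst_ty (Suc j) (alift 1 0 s) B)"
| "asubst_ty j s (AEq a b) = AEq (asubst j s a) (asubst j s b)"
| "asubst_ty j s (ATerm a) = ATerm (asubst j s a)"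
| "asubst j s (AVar i) = (if i = j then s else if j < i then AVar (i - 1) else AVar i)"
| "asubst j s (AApp a b) = AApp (asubst j s a) (asubst j s b)"
| "asubst j s (ALam e S a) = ALam e (asubst_ty j s S) (asubst (Suc j) (alift 1 0 s) a)"
| "asubst j s AZero = AZero"
| "asubst j s (ASuc a) = ASuc (asubst j s a)"
| "asubst j s (ARecNat S a) =
     ARecNat (asubst_ty (Suc j) (alift 1 0 s) S) (asubst (j + 2) (alift 2 0 s) a)"
| "asubst j s (ARec S' S a) =
     ARec (asubst_ty j s S') (asubst_ty (Suc j) (alift 1 0 s) S) (asubst (j + 2) (alift 2 0 s) a)"
| "asubst j s (ACase S a b d) =
     ACase (asubst_ty (Suc j) (alift 1 0 s) S) (asubst j s a) (asubst j s b) (asubst j s d)"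
| "asubst j s (AJoin a b) = AJoin (asubst j s a) (asubst j s b)"
| "asubst j s (AConv S a b) = AConv (asubst_ty (Suc j) (alift 1 0 s) S) (asubst j s a) (asubst j s b)"
| "asubst j s (ATerminates a) = ATerminates (asubst j s a)"
| "asubst j s (AReflect a b) = AReflect (asubst j s a) (asubst j s b)"
| "asubst j s (AInv a b) = AInv (asubst j s a) (asubst j s b)"
| "asubst j s (AContra S a) = AContra (asubst_ty j s S) (asubst j s a)"
| "asubst j s (AAbort S) = AAbort (asubst_ty j s S)"

primrec erase_ty :: "aty \<Rightarrow> ty"
  and erase :: "atm \<Rightarrow> tm" where
  "erase_ty ANat = Nat"
| "erase_ty (APi e A B) = Pi e (erase_ty A) (erase_ty B)"
| "erase_ty (AEq a b) = Eq (erase a) (erase b)"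
| "erase_ty (ATerm a) = Term (erase a)"
| "erase (AVar i) = Var i"
| "erase (AApp a b) = App (erase a) (erase b)"
| "erase (ALam e S a) = Lam (erase a)"
| "erase AZero = Zero"
| "erase (ASuc a) = TSuc (erase a)"
| "erase (ARecNat S a) = Rec (erase a)"
| "erase (ARec S' S a) = Rec (erase a)"
| "erase (ACase S a b d) = Case (erase a) (erase b) (erase d)"
| "erase (AJoin a b) = Join"
| "erase (AConv S a b) = erase a"
| "erase (ATerminates a) = Terminates"
| "erase (AReflect a b) = erase a"
| "erase (AInv a b) = erase a"
| "erase (AContra S a) = Contra"
| "erase (AAbort S) = Abort"

type_synonym actx = "aty list"

definition erase_ctx :: "actx \<Rightarrow> ctx" where
  "erase_ctx G = map erase_ty G"

definition alookup :: "actx \<Rightarrow> nat \<Rightarrow> aty" where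
  "alookup G i = alift_ty (Suc i) 0 (G ! i)"

definition arecnat_hyp :: aty where
  "arecnat_hyp = APi Down ANat (APi Down (AEq (AVar 1) (ASuc (AVar 0))) (ATerm (AApp (AVar 3) (AVar 1))))"

inductive
  aok :: "nat \<Rightarrow> actx \<Rightarrow> bool" and
  awf :: "nat \<Rightarrow> actx \<Rightarrow> aty \<Rightarrow> bool" and
  atyp :: "nat \<Rightarrow> actx \<Rightarrow> atm \<Rightarrow> aty \<Rightarrow> eff \<Rightarrow> bool"
  for N :: nat
where
  aok_nil: "aok N []"
| aok_cons: "aok N G \<Longrightarrow> awf N G S \<Longrightarrow> aok N (S # G)"
| awf_nat: "aok N G \<Longrightarrow> awf N G ANat"
| awf_pi: "awf N G S \<Longrightarrow> awf N (S # G) S' \<Longrightarrow> awf N G (APi th S S')"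
| awf_eq: "atyp N G a S Q \<Longrightarrow> atyp N G a' S' Q \<Longrightarrow> awf N G S \<Longrightarrow> awf N G S'
            \<Longrightarrow> awf N G (AEq a a')"
| awf_term: "atyp N G a S Q \<Longrightarrow> awf N G (ATerm a)"
| A_Var: "i < length G \<Longrightarrow> aok N G \<Longrightarrow> atyp N G (AVar i) (alookup G i) th"
| A_Join: "steps_le N (erase a) t \<Longrightarrow> steps_le N (erase a') t
            \<Longrightarrow> atyp N G a S Q \<Longrightarrow> atyp N G a' S' Q
            \<Longrightarrow> atyp N G (AJoin a a') (AEq a a') th"
| A_Conv: "atyp N G a (asubst_ty 0 a2 S) th \<Longrightarrow> atyp N G a' (AEq a1 a2) Down
            \<Longrightarrow> awf N G (asubst_ty 0 a1 S) \<Longrightarrow> atyp N G (AConv S a a') (asubst_ty 0 a1 S) th"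
| A_Reflect: "atyp N G a S Q \<Longrightarrow> atyp N G a' (ATerm a) Down \<Longrightarrow> atyp N G (AReflect a a') S th"
| A_Reify: "atyp N G a S Down \<Longrightarrow> atyp N G (ATerminates a) (ATerm a) th"
| A_CtxTerm: "atyp N G a (ATerm a'') th \<Longrightarrow> is_ectx C \<Longrightarrow> erase a'' = fill C (erase a')
            \<Longrightarrow> atyp N G (AInv a a') (ATerm a') th"
| A_Abs: "atyp N (S' # G) a S rho \<Longrightarrow> awf N G (APi rho S' S)
            \<Longrightarrow> atyp N G (ALam rho S' a) (APi rho S' S) th"
| A_App: "atyp N G a (APi rho S' S) th \<Longrightarrow> atyp N G a' S' th \<Longrightarrow> eff_le rho th
            \<Longrightarrow> atyp N G (AApp a a') (asubst_ty 0 a' S) th"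
| A_Zero: "aok N G \<Longrightarrow> atyp N G AZero ANat th"
| A_Suc: "atyp N G a ANat th \<Longrightarrow> atyp N G (ASuc a) ANat th"
| A_Rec: "atyp N (alift_ty 1 0 S' # APi Q S' S # G) a (alift_ty 1 1 S) Q
            \<Longrightarrow> atyp N G (ARec S' S a) (APi Q S' S) th"
| A_RecNat: "atyp N (arecnat_hyp # ANat # APi Q ANat S # G) (alift 1 0 a)
               (alift_ty 1 2 (alift_ty 1 0 S)) Down
            \<Longrightarrow> atyp N G (ARecNat S a) (APi Down ANat S) th"
| A_Case: "atyp N G a ANat th \<Longrightarrow> atyp N G a' (asubst_ty 0 AZero S) th
            \<Longrightarrow> atyp N G a'' (APi rho ANat (asubst_ty 0 (ASuc (AVar 0)) (alift_ty 1 1 S))) th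
            \<Longrightarrow> eff_le rho th \<Longrightarrow> atyp N G (ACase S a a' a'') (asubst_ty 0 a S) th"
| A_Contra: "atyp N G a (AEq AZero (ASuc a')) Down \<Longrightarrow> atyp N G (AContra S a) S th"
| A_Abort: "aok N G \<Longrightarrow> atyp N G (AAbort S) S Q"

end

theory Submission
  imports Defs
begin

text \<open>Erasure commutes with lifting and substitution, and a bounded reduction sequence is in
particular a reduction sequence. Hence every annotated rule, after erasure, becomes an instance
of the unannotated rule of the same name, and the theorem follows by simultaneous induction over
context formation, type formation and typing.\<close>

lemma erase_alift:
  "erase_ty (alift_ty k c S) = tylift k c (erase_ty S)"
  "erase (alift k c a) = tlift k c (erase a)"
  by (induction S and a arbitrary: c and c) auto

lemma erase_asubst:
  "erase_ty (asubst_ty j s S) = tysubst j (erase s) (erase_ty S)"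
  "erase (asubst j s a) = tsubst j (erase s) (erase a)"
  by (induction S and a arbitrary: j s and j s) (auto simp: erase_alift)

lemma erase_ctx_Nil [simp]: "erase_ctx [] = []"
  and erase_ctx_Cons [simp]: "erase_ctx (S # G) = erase_ty S # erase_ctx G"
  and length_erase_ctx [simp]: "length (erase_ctx G) = length G"
  by (simp_all add: erase_ctx_def)

lemma erase_alookup:
  assumes "i < length G"
  shows "erase_ty (alookup G i) = lookup (erase_ctx G) i"
  using assms by (simp add: alookup_def lookup_def erase_ctx_def erase_alift)

lemma erase_arecnat_hyp: "erase_ty arecnat_hyp = recnat_hyp"
  by (simp add: arecnat_hyp_def recnat_hyp_def)

lemma steps_le_imp_rtranclp: "steps_le N t t' \<Longrightarrow> step\<^sup>*\<^sup>* t t'"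
  unfolding steps_le_def by (auto intro: relpowp_imp_rtranclp)

lemma erasure_sound:
  "aok N G \<Longrightarrow> ctx_ok (erase_ctx G)"
  "awf N G S \<Longrightarrow> ty_wf (erase_ctx G) (erase_ty S)"
  "atyp N G a S th \<Longrightarrow> has_type (erase_ctx G) (erase a) (erase_ty S) th"
proof (induction rule: aok_awf_atyp.inducts)
  case (A_Var i G th)
  then show ?case by (simp add: erase_alookup T_Var)
next
  case (A_Join a t a' G S S' th)
  then show ?case by (auto intro: T_Join steps_le_imp_rtranclp)
next
  case (A_Conv G a a2 S th a' a1)
  then show ?case by (auto simp: erase_asubst intro: T_Conv)
next
  case (A_App G a rho S' S th a')
  then show ?case by (auto simp: erase_asubst intro: T_App)
next
  case (A_Rec S' S G a th)
  then show ?case by (auto simp: erase_alift intro: T_Rec)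
next
  case (A_RecNat S G a th)
  then show ?case by (auto simp: erase_alift erase_arecnat_hyp intro: T_RecNat)
next
  case (A_Case G a th a' S a'' rho)
  then show ?case by (auto simp: erase_asubst erase_alift intro!: T_Case)
qed (auto intro: ctx_ok_ty_wf_has_type.intros)

theorem proposition1:
  fixes N :: nat and G :: actx and a :: atm and S :: aty and th :: eff
  assumes "atyp N G a S th"
  shows "has_type (erase_ctx G) (erase a) (erase_ty S) th"
  using erasure_sound(3)[OF assms] .

end
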